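(* Let $d\ge 1$, let $\epsilon>0$ and let $\eta$ be a positive integer. Let $S_{\text{prototype}}$ and $S_{\text{inc}}$ be disjoint finite subsets of $\mathbb{R}^d$, and put $Q' = S_{\text{prototype}}\cup S_{\text{inc}}$. Let $c_1$ be a cluster of $S_{\text{prototype}}$ (in the sense defined in the context, computed within $S_{\text{prototype}}$), and let $u\in c_1$. Let $v\in S_{\text{inc}}$ be such that $u$ and $v$ are both core points of $Q'$ and $\mathrm{dist}(u,v)\le\epsilon$ (so $u$ and $v$ are directly density-reachable from each other in $Q'$). Then: (i) for every $w\in c_1$ there is a path in $G(Q')$ from $w$ to $v$ consisting only of active edges of $G(Q')$; and (ii) for every $z\in S_{\text{inc}}$ that is density-reachable from $v$ in $Q'$, or from which $v$ is density-reachable in $Q'$, the point $z$ is density-connected to $u$ in $Q'$ and $z$ belongs to the same cluster of $Q'$ as $u$ (and hence as every point of $c_1$).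
   Context: Distances are Euclidean. For a finite set $Q\subset\mathbb{R}^d$ and $x\in Q$, the $\epsilon$-neighborhood of $x$ in $Q$ is $N_\epsilon^Q(x)=\{y\in Q:\mathrm{dist}(x,y)\le\epsilon\}$. The point $x$ is a core point of $Q$ if $|N_\epsilon^Q(x)|\ge\eta$. A point $p$ is directly density-reachable from $q$ in $Q$ if $p\in N_\epsilon^Q(q)$ and $q$ is a core point of $Q$. A point $p$ is density-reachable from $q$ in $Q$ if there is a sequence $p_1=p,\dots,p_m=q$ in $Q$ such that consecutive points are linked by direct density-reachability (each link going out from a core point). The graph $G(Q)$ has vertex set $Q$ and an edge $\{x,y\}$ for distinct $x,y\in Q$ with $\mathrm{dist}(x,y)\le\epsilon$; an edge is called active if at least one of its endpoints is a core point of $Q$ (edges with both endpoints core are "volatile-yes", with exactly one core endpoint "volatile-weak"). A cluster of $Q$ is a maximal set of vertices of $G(Q)$ that are pairwise connected by paths of active edges (i.e. a connected component, containing a core point, of the subgraph of active edges); two points are density-connected when they lie in such a common connected set. The same threshold $\eta$ and radius $\epsilon$ are used for $S_{\text{prototype}}$ and for $Q'$. *)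

theory Defs
  imports "HOL-Analysis.Analysis"
begin

definition nbhd :: "real \<Rightarrow> 'a::euclidean_space set \<Rightarrow> 'a \<Rightarrow> 'a set" where
  "nbhd eps Q x = {y \<in> Q. dist x y \<le> eps}"

definition core_point :: "real \<Rightarrow> nat \<Rightarrow> 'a::euclidean_space set \<Rightarrow> 'a \<Rightarrow> bool" where
  "core_point eps eta Q x \<longleftrightarrow> x \<in> Q \<and> card (nbhd eps Q x) \<ge> eta"

definition dir_reach :: "real \<Rightarrow> nat \<Rightarrow> 'a::euclidean_space set \<Rightarrow> 'a \<Rightarrow> 'a \<Rightarrow> bool" where
  "dir_reach eps eta Q p q \<longleftrightarrow> p \<in> nbhd eps Q q \<and> core_point eps eta Q q"

definition dens_reach :: "real \<Rightarrow> nat \<Rightarrow> 'a::euclidean_space set \<Rightarrow> 'a \<Rightarrow> 'a \<Rightarrow> bool" where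
  "dens_reach eps eta Q p q \<longleftrightarrow> p \<in> Q \<and> q \<in> Q \<and> (dir_reach eps eta Q)\<^sup>*\<^sup>* p q"

definition graph_edge :: "real \<Rightarrow> 'a::euclidean_space set \<Rightarrow> 'a \<Rightarrow> 'a \<Rightarrow> bool" where
  "graph_edge eps Q x y \<longleftrightarrow> x \<in> Q \<and> y \<in> Q \<and> x \<noteq> y \<and> dist x y \<le> eps"

definition active_edge :: "real \<Rightarrow> nat \<Rightarrow> 'a::euclidean_space set \<Rightarrow> 'a \<Rightarrow> 'a \<Rightarrow> bool" where
  "active_edge eps eta Q x y \<longleftrightarrow> graph_edge eps Q x y \<and> (core_point eps eta Q x \<or> core_point eps eta Q y)"

definition active_path :: "real \<Rightarrow> nat \<Rightarrow> 'a::euclidean_space set \<Rightarrow> 'a \<Rightarrow> 'a \<Rightarrow> bool" where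
  "active_path eps eta Q x y \<longleftrightarrow> x \<in> Q \<and> y \<in> Q \<and> (active_edge eps eta Q)\<^sup>*\<^sup>* x y"

definition is_cluster :: "real \<Rightarrow> nat \<Rightarrow> 'a::euclidean_space set \<Rightarrow> 'a set \<Rightarrow> bool" where
  "is_cluster eps eta Q C \<longleftrightarrow>
     C \<subseteq> Q \<and> (\<exists>x\<in>C. core_point eps eta Q x) \<and>
     (\<forall>x\<in>C. \<forall>y\<in>C. active_path eps eta Q x y) \<and>
     (\<forall>x\<in>C. \<forall>y\<in>Q. active_path eps eta Q x y \<longrightarrow> y \<in> C)"

definition dens_connected :: "real \<Rightarrow> nat \<Rightarrow> 'a::euclidean_space set \<Rightarrow> 'a \<Rightarrow> 'a \<Rightarrow> bool" where
  "dens_connected eps eta Q x y \<longleftrightarrow> (\<exists>C. is_cluster eps eta Q C \<and> x \<in> C \<and> y \<in> C)"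

end

theory Submission
  imports Defs
begin

text \<open>Adding points to a finite set only enlarges neighbourhoods, so core points of
S_proto stay core points of Q' and every active path inside the cluster c1 survives in
G(Q'). The active edge between the core points u and v then joins c1 to v, and the
density-reachability chains through v are themselves active paths. Hence everything
lies in the active component of u in G(Q'), which is a cluster because u is a core point.\<close>

lemma symp_active_edge: "symp (active_edge eps eta Q)"
  unfolding symp_def active_edge_def graph_edge_def by (auto simp: dist_commute)

lemma active_path_sym: "active_path eps eta Q x y \<Longrightarrow> active_path eps eta Q y x"
  unfolding active_path_def using sympD[OF symp_rtranclp[OF symp_active_edge]] by blast

lemma active_path_trans:
  "active_path eps eta Q x y \<Longrightarrow> active_path eps eta Q y z \<Longrightarrow> active_path eps eta Q x z"
  unfolding active_path_def by (meson rtranclp_trans)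

lemma active_path_edge:
  "active_edge eps eta Q x y \<Longrightarrow> active_path eps eta Q x y"
  unfolding active_path_def active_edge_def graph_edge_def by blast

lemma dir_reach_le_active_edge: "dir_reach eps eta Q \<le> (active_edge eps eta Q)\<^sup>=\<^sup>="
  unfolding dir_reach_def nbhd_def core_point_def active_edge_def graph_edge_def
  by (auto simp: dist_commute)

lemma dens_reach_imp_active_path:
  assumes "dens_reach eps eta Q p q"
  shows "active_path eps eta Q p q"
proof -
  have "(dir_reach eps eta Q)\<^sup>*\<^sup>* p q"
    using assms unfolding dens_reach_def by blast
  then have "((active_edge eps eta Q)\<^sup>=\<^sup>=)\<^sup>*\<^sup>* p q"
    using rtranclp_mono[OF dir_reach_le_active_edge] by blast
  then show ?thesis
    using assms unfolding dens_reach_def active_path_def by simp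
qed

lemma core_point_mono:
  assumes "core_point eps eta S x" "S \<subseteq> T" "finite T"
  shows "core_point eps eta T x"
proof -
  have "card (nbhd eps S x) \<le> card (nbhd eps T x)"
    using assms(2,3) unfolding nbhd_def by (intro card_mono) auto
  then show ?thesis
    using assms unfolding core_point_def by auto
qed

lemma active_edge_mono:
  assumes "active_edge eps eta S x y" "S \<subseteq> T" "finite T"
  shows "active_edge eps eta T x y"
  using assms core_point_mono[OF _ assms(2,3)] unfolding active_edge_def graph_edge_def by blast

lemma active_path_mono:
  assumes "active_path eps eta S x y" "S \<subseteq> T" "finite T"
  shows "active_path eps eta T x y"
proof -
  have "(active_edge eps eta T)\<^sup>*\<^sup>* x y"
    using assms(1) active_edge_mono[OF _ assms(2,3)] mono_rtranclp
    unfolding active_path_def by metis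
  then show ?thesis
    using assms unfolding active_path_def by blast
qed

definition active_component :: "real \<Rightarrow> nat \<Rightarrow> 'a::euclidean_space set \<Rightarrow> 'a \<Rightarrow> 'a set" where
  "active_component eps eta Q x = {y. active_path eps eta Q x y}"

lemma is_cluster_active_component:
  assumes "core_point eps eta Q x"
  shows "is_cluster eps eta Q (active_component eps eta Q x)"
  unfolding is_cluster_def
proof (intro conjI ballI impI)
  have "x \<in> active_component eps eta Q x"
    using assms unfolding active_component_def active_path_def core_point_def by simp
  then show "\<exists>y\<in>active_component eps eta Q x. core_point eps eta Q y"
    using assms by blast
  show "active_component eps eta Q x \<subseteq> Q"
    unfolding active_component_def active_path_def by blast
next
  fix y z
  assume "y \<in> active_component eps eta Q x" "z \<in> active_component eps eta Q x"
  then show "active_path eps eta Q y z"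
    unfolding active_component_def by (blast intro: active_path_sym active_path_trans)
next
  fix y z
  assume "y \<in> active_component eps eta Q x" "active_path eps eta Q y z"
  then show "z \<in> active_component eps eta Q x"
    unfolding active_component_def by (blast intro: active_path_trans)
qed

theorem lemma4p2:
  fixes eps :: real and eta :: nat
    and S_proto S_inc c1 :: "'a::euclidean_space set" and u v :: 'a
  assumes "eps > 0" and "eta > 0"
    and "finite S_proto" and "finite S_inc" and "S_proto \<inter> S_inc = {}"
    and "is_cluster eps eta S_proto c1" and "u \<in> c1"
    and "v \<in> S_inc"
    and "core_point eps eta (S_proto \<union> S_inc) u"
    and "core_point eps eta (S_proto \<union> S_inc) v"
    and "dist u v \<le> eps"
  shows "(\<forall>w\<in>c1. active_path eps eta (S_proto \<union> S_inc) w v) \<and>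
         (\<forall>z\<in>S_inc. dens_reach eps eta (S_proto \<union> S_inc) z v \<or>
                     dens_reach eps eta (S_proto \<union> S_inc) v z \<longrightarrow>
            dens_connected eps eta (S_proto \<union> S_inc) z u \<and>
            (\<exists>C. is_cluster eps eta (S_proto \<union> S_inc) C \<and> u \<in> C \<and> z \<in> C \<and> c1 \<subseteq> C))"
proof -
  let ?Q = "S_proto \<union> S_inc"
  let ?C = "active_component eps eta ?Q u"
  have u_proto: "u \<in> S_proto"
    using assms(6,7) unfolding is_cluster_def by blast
  have "active_edge eps eta ?Q u v"
    using u_proto assms(5,8,9,11) unfolding active_edge_def graph_edge_def by blast
  then have u_v: "active_path eps eta ?Q u v"
    by (rule active_path_edge)
  have c1_u: "active_path eps eta ?Q w u" if "w \<in> c1" for w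
    using assms(3,4,6,7) that unfolding is_cluster_def
    by (blast intro: active_path_mono)
  have c1_C: "c1 \<subseteq> ?C"
    using c1_u active_path_sym unfolding active_component_def by blast
  have reach_C: "z \<in> ?C"
    if "dens_reach eps eta ?Q z v \<or> dens_reach eps eta ?Q v z" for z
    using that u_v dens_reach_imp_active_path active_path_sym active_path_trans
    unfolding active_component_def by blast
  have "u \<in> ?C"
    using c1_C assms(7) by blast
  then show ?thesis
    using c1_u u_v active_path_trans c1_C reach_C
      is_cluster_active_component[OF assms(9)]
    unfolding dens_connected_def by blast
qed

end
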